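(* All POPs $(a,b,c;d;e)$ with $\{d,e\}=\{2,5\}$ or $\{d,e\}=\{3,5\}$ and $(a,b,c)$ an arbitrary ordering of $[5]\setminus\{d,e\}$ are Wilf-equivalent to one another.
   Context: A partially ordered pattern (POP) $p$ of size $k$ is a partial order $\le_p$ on $[k]$. A permutation $\pi=\pi_1\cdots\pi_n$ contains $p$ if there are indices $i_1<\dots<i_k$ with $\pi_{i_j}<\pi_{i_m}$ whenever $j<_p m$; otherwise it avoids $p$. $p\sim q$ (Wilf-equivalence) means the numbers of permutations of $[n]$ avoiding $p$ and avoiding $q$ coincide for all $n\ge1$. Notation: $(a,b,c;d;e)$ denotes the POP of size $5$ on $\{a,b,c,d,e\}=[5]$ in which $c<b<a$ form a chain and $d,e$ are isolated. *)

theory Defs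
  imports "HOL-Combinatorics.Permutations"
begin

text \<open>A POP of size k is given by its strict order relation P on {1..k}:
  P j m means j <_p m.  A permutation of [n] is a function permuting {1..n};
  its one-line notation is pi 1, ..., pi n.\<close>

definition contains_pop :: "(nat \<Rightarrow> nat \<Rightarrow> bool) \<Rightarrow> nat \<Rightarrow> nat \<Rightarrow> (nat \<Rightarrow> nat) \<Rightarrow> bool" where
  "contains_pop P k n \<pi> \<longleftrightarrow>
     (\<exists>\<iota>. strict_mono_on {1..k} \<iota> \<and> \<iota> ` {1..k} \<subseteq> {1..n} \<and>
          (\<forall>j\<in>{1..k}. \<forall>m\<in>{1..k}. P j m \<longrightarrow> \<pi> (\<iota> j) < \<pi> (\<iota> m)))"

definition avoiders :: "(nat \<Rightarrow> nat \<Rightarrow> bool) \<Rightarrow> nat \<Rightarrow> nat \<Rightarrow> (nat \<Rightarrow> nat) set" where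
  "avoiders P k n = {\<pi>. \<pi> permutes {1..n} \<and> \<not> contains_pop P k n \<pi>}"

definition wilf_equiv :: "(nat \<Rightarrow> nat \<Rightarrow> bool) \<Rightarrow> (nat \<Rightarrow> nat \<Rightarrow> bool) \<Rightarrow> nat \<Rightarrow> bool" where
  "wilf_equiv P Q k \<longleftrightarrow> (\<forall>n\<ge>1. card (avoiders P k n) = card (avoiders Q k n))"

text \<open>The POP (a,b,c;d;e) of size 5: c <_p b <_p a is a chain, d and e are isolated.\<close>
definition pop5 :: "nat \<Rightarrow> nat \<Rightarrow> nat \<Rightarrow> nat \<Rightarrow> nat \<Rightarrow> nat \<Rightarrow> nat \<Rightarrow> bool" where
  "pop5 a b c d e x y \<longleftrightarrow> (x, y) \<in> {(c, b), (b, a), (c, a)}"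

end

theory Submission
  imports Defs "HOL-Combinatorics.Multiset_Permutations"
begin

(*
  Since 5 is isolated in (a,b,c;d;e), an occurrence may always use the last entry of a permutation
  as its fifth position, so only the prefix \<pi>(1) ... \<pi>(n-1) matters.  For {d,e} = {2,5} the chain
  sits at positions 1, 3, 4 and the POP is contained iff the prefix contains the classical pattern of
  length 3 given by the chain at positions i < k < l with k \<ge> i + 2; for {d,e} = {3,5} the same holds
  for the reversed prefix.  Hence there are n times as many avoiders of length n as permutations of
  length n - 1 avoiding such "gapped" occurrences of one of the six patterns of length 3.

  Complementation pairs 123 with 321, 132 with 312 and 213 with 231.  For 123, 132 and 213 the
  gapped avoiders are generated by prepending a new first entry.  Label an avoider p by its number k
  of children and the number b of values that could be prepended to p without heading an occurrence
  even when the gap is not required; every child of p has b or b + 1 children.  In all three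
  generating trees the labels obey the succession rule
  (k,b) \<leadsto> (b,b)^(k-b) (b+1,2) (b+1,3) ... (b+1,b+1) with root (1,1), so all six counts coincide.
*)

section \<open>Gapped occurrences of patterns of length 3\<close>

(* A pattern of length 3 is given by the outcomes (x < y, x < z, y < z) of the three comparisons
   within the triples (x, y, z) it accepts as occurrences. *)
type_synonym pattern3 = "bool \<Rightarrow> bool \<Rightarrow> bool \<Rightarrow> bool"

definition gapped_occurs :: "pattern3 \<Rightarrow> nat list \<Rightarrow> bool" where
  "gapped_occurs P xs \<longleftrightarrow> (\<exists>i k l. i + 2 \<le> k \<and> k < l \<and> l < length xs \<and>
     P (xs ! i < xs ! k) (xs ! i < xs ! l) (xs ! k < xs ! l))"

definition heads_occurrence :: "pattern3 \<Rightarrow> nat \<Rightarrow> nat list \<Rightarrow> bool" where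
  "heads_occurrence P x ys \<longleftrightarrow> (\<exists>i j. i < j \<and> j < length ys \<and> P (x < ys ! i) (x < ys ! j) (ys ! i < ys ! j))"

lemma not_heads_occurrence_iff_sorted_wrt:
  "\<not> heads_occurrence P x ys \<longleftrightarrow> sorted_wrt (\<lambda>y z. \<not> P (x < y) (x < z) (y < z)) ys"
  by (auto simp: heads_occurrence_def sorted_wrt_iff_nth_less)

lemma gapped_occurs_iff_heads_occurrence:
  "gapped_occurs P xs \<longleftrightarrow> (\<exists>i<length xs. heads_occurrence P (xs ! i) (drop (i + 2) xs))"
proof
  assume "gapped_occurs P xs"
  then obtain i k l where "i + 2 \<le> k" "k < l" "l < length xs"
    and "P (xs ! i < xs ! k) (xs ! i < xs ! l) (xs ! k < xs ! l)"
    unfolding gapped_occurs_def by blast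
  moreover obtain a b where "k = i + 2 + a" "l = i + 2 + b"
    using \<open>i + 2 \<le> k\<close> \<open>k < l\<close> by (metis le_iff_add less_imp_le order_trans)
  ultimately show "\<exists>i<length xs. heads_occurrence P (xs ! i) (drop (i + 2) xs)"
    unfolding heads_occurrence_def by (intro exI[of _ i] conjI exI[of _ a] exI[of _ b]) auto
next
  assume "\<exists>i<length xs. heads_occurrence P (xs ! i) (drop (i + 2) xs)"
  then obtain i a b where "a < b" "b < length xs - (i + 2)"
    and "P (xs ! i < xs ! (i + 2 + a)) (xs ! i < xs ! (i + 2 + b)) (xs ! (i + 2 + a) < xs ! (i + 2 + b))"
    unfolding heads_occurrence_def by auto
  then show "gapped_occurs P xs"
    unfolding gapped_occurs_def by (intro exI[of _ i] exI[of _ "i + 2 + a"] exI[of _ "i + 2 + b"]) auto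
qed

lemma gapped_occurs_Nil [simp]: "\<not> gapped_occurs P []"
  by (simp add: gapped_occurs_def)

lemma gapped_occurs_Cons:
  "gapped_occurs P (x # xs) \<longleftrightarrow> heads_occurrence P x (tl xs) \<or> gapped_occurs P xs"
  unfolding gapped_occurs_iff_heads_occurrence by (simp add: Ex_less_Suc2 drop_Suc)

definition complement :: "pattern3 \<Rightarrow> pattern3" where
  "complement P = (\<lambda>A B C. P (\<not> A) (\<not> B) (\<not> C))"

lemma gapped_occurs_map_mono:
  assumes "\<And>x y. x \<in> set xs \<Longrightarrow> y \<in> set xs \<Longrightarrow> f x < f y \<longleftrightarrow> x < y"
  shows "gapped_occurs P (map f xs) \<longleftrightarrow> gapped_occurs P xs"
proof -
  have "f (xs ! i) < f (xs ! j) \<longleftrightarrow> xs ! i < xs ! j" if "i < length xs" "j < length xs" for i j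
    using assms that by (simp add: nth_mem)
  then show ?thesis
    unfolding gapped_occurs_def by (intro iff_exI conj_cong refl) auto
qed

lemma gapped_occurs_map_antimono:
  assumes "distinct xs" and "\<And>x y. x \<in> set xs \<Longrightarrow> y \<in> set xs \<Longrightarrow> x \<noteq> y \<Longrightarrow> f x < f y \<longleftrightarrow> y < x"
  shows "gapped_occurs P (map f xs) \<longleftrightarrow> gapped_occurs (complement P) xs"
proof -
  have "f (xs ! i) < f (xs ! j) \<longleftrightarrow> \<not> xs ! i < xs ! j" if "i < j" "j < length xs" for i j
  proof -
    have "xs ! i \<noteq> xs ! j" using assms(1) that by (simp add: nth_eq_iff_index_eq)
    then show ?thesis using assms(2) that by (auto simp: nth_mem)
  qed
  then show ?thesis
    unfolding gapped_occurs_def complement_def by (intro iff_exI conj_cong refl) auto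
qed

section \<open>A generating tree for the gapped avoiders\<close>

definition shift_up :: "nat \<Rightarrow> nat \<Rightarrow> nat" where
  "shift_up v y = (if y < v then y else Suc y)"

definition shift_down :: "nat \<Rightarrow> nat \<Rightarrow> nat" where
  "shift_down v w = (if w \<le> v then w else w - 1)"

definition prepend :: "nat \<Rightarrow> nat list \<Rightarrow> nat list" where
  "prepend v p = v # map (shift_up v) p"

lemma shift_up_less_iff [simp]: "shift_up v x < shift_up v y \<longleftrightarrow> x < y"
  by (simp add: shift_up_def)

lemma less_shift_up_iff [simp]: "v < shift_up v y \<longleftrightarrow> v \<le> y"
  by (simp add: shift_up_def)

lemma le_shift_up_iff [simp]: "w \<le> shift_up v y \<longleftrightarrow> shift_down v w \<le> y"
  by (auto simp: shift_up_def shift_down_def)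

lemma shift_down_shift_up [simp]: "shift_down v (shift_up v y) = y"
  by (simp add: shift_up_def shift_down_def)

lemma shift_up_shift_down: "w \<noteq> v \<Longrightarrow> shift_up v (shift_down v w) = w"
  by (auto simp: shift_up_def shift_down_def)

lemma inj_shift_up: "inj (shift_up v)"
  by (metis injI shift_down_shift_up)

lemma shift_up_image:
  assumes "v \<le> m"
  shows "shift_up v ` {0..<m} = {0..<Suc m} - {v}"
proof
  show "{0..<Suc m} - {v} \<subseteq> shift_up v ` {0..<m}"
  proof
    fix w assume "w \<in> {0..<Suc m} - {v}"
    then have "w = shift_up v (shift_down v w)" "shift_down v w \<in> {0..<m}"
      using assms shift_up_shift_down[of w v] by (auto simp: shift_down_def)
    then show "w \<in> shift_up v ` {0..<m}" by blast
  qed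
qed (auto simp: shift_up_def)

lemma permutations_of_set_Suc:
  "permutations_of_set {0..<Suc m} = (\<lambda>(p, v). prepend v p) ` (permutations_of_set {0..<m} \<times> {..m})"
proof -
  have "permutations_of_set ({0..<Suc m} - {v}) = map (shift_up v) ` permutations_of_set {0..<m}"
    if "v \<le> m" for v
    using permutations_of_set_image_inj[OF inj_on_subset[OF inj_shift_up]] shift_up_image[OF that]
    by (metis subset_UNIV)
  then show ?thesis
    by (subst permutations_of_set_nonempty) (auto simp: prepend_def image_image less_Suc_eq_le)
qed

lemma inj_prepend: "inj (\<lambda>(p, v). prepend v p)"
  by (rule injI) (auto simp: prepend_def inj_map_eq_map[OF inj_shift_up])

definition slot_ok :: "pattern3 \<Rightarrow> nat \<Rightarrow> nat list \<Rightarrow> bool" where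
  "slot_ok P v p \<longleftrightarrow> \<not> heads_occurrence P v (map (shift_up v) p)"

lemma slot_ok_iff_sorted_wrt:
  "slot_ok P v p \<longleftrightarrow> sorted_wrt (\<lambda>y z. \<not> P (v \<le> y) (v \<le> z) (y < z)) p"
  by (simp add: slot_ok_def not_heads_occurrence_iff_sorted_wrt sorted_wrt_map)

lemma slot_ok_Cons:
  "slot_ok P v (x # p) \<longleftrightarrow> (\<forall>y\<in>set p. \<not> P (v \<le> x) (v \<le> y) (x < y)) \<and> slot_ok P v p"
  by (simp add: slot_ok_iff_sorted_wrt)

lemma slot_ok_tl: "slot_ok P v p \<Longrightarrow> slot_ok P v (tl p)"
  by (cases p) (simp_all add: slot_ok_Cons)

lemma slot_ok_map_shift_up: "slot_ok P w (map (shift_up v) p) \<longleftrightarrow> slot_ok P (shift_down v w) p"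
  by (simp add: slot_ok_iff_sorted_wrt sorted_wrt_map)

lemma gapped_occurs_prepend:
  "gapped_occurs P (prepend v p) \<longleftrightarrow> \<not> slot_ok P v (tl p) \<or> gapped_occurs P p"
proof -
  have "gapped_occurs P (map (shift_up v) p) \<longleftrightarrow> gapped_occurs P p"
    by (rule gapped_occurs_map_mono) simp
  then show ?thesis
    by (simp add: prepend_def gapped_occurs_Cons slot_ok_def map_tl)
qed

definition gap_avoiders :: "pattern3 \<Rightarrow> nat \<Rightarrow> nat list set" where
  "gap_avoiders P m = {xs \<in> permutations_of_set {0..<m}. \<not> gapped_occurs P xs}"

definition children_slots :: "pattern3 \<Rightarrow> nat list \<Rightarrow> nat set" where
  "children_slots P p = {v. v \<le> length p \<and> slot_ok P v (tl p)}"

definition active_slots :: "pattern3 \<Rightarrow> nat list \<Rightarrow> nat set" where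
  "active_slots P p = {v. v \<le> length p \<and> slot_ok P v p}"

lemma length_permutations_of_set_atLeastLessThan:
  "p \<in> permutations_of_set {0..<m} \<Longrightarrow> length p = m"
  using length_finite_permutations_of_set by fastforce

lemma active_slots_le: "p \<in> permutations_of_set {0..<m} \<Longrightarrow> u \<in> active_slots P p \<Longrightarrow> u \<le> m"
  by (simp add: active_slots_def length_permutations_of_set_atLeastLessThan)

lemma children_slots_le: "p \<in> permutations_of_set {0..<m} \<Longrightarrow> v \<in> children_slots P p \<Longrightarrow> v \<le> m"
  by (simp add: children_slots_def length_permutations_of_set_atLeastLessThan)

lemma finite_active_slots: "finite (active_slots P p)"
  by (simp add: active_slots_def)

lemma active_slots_subset_children_slots: "active_slots P p \<subseteq> children_slots P p"
  by (auto simp: active_slots_def children_slots_def slot_ok_tl)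

lemma gap_avoiders_Suc:
  "gap_avoiders P (Suc m) = (\<lambda>(p, v). prepend v p) ` (SIGMA p:gap_avoiders P m. children_slots P p)"
  unfolding gap_avoiders_def children_slots_def permutations_of_set_Suc
  by (auto simp: gapped_occurs_prepend length_permutations_of_set_atLeastLessThan)

lemma card_shift_down_preimage:
  assumes "v \<le> m"
  shows "card {w. w \<le> Suc m \<and> Q (shift_down v w)} = card {u. u \<le> m \<and> Q u} + (if Q v then 1 else 0)"
proof -
  have "{w. w \<le> Suc m \<and> Q (shift_down v w)} = shift_up v ` {u. u \<le> m \<and> Q u} \<union> {w. w = v \<and> Q v}"
  proof (intro set_eqI iffI)
    fix w assume "w \<in> {w. w \<le> Suc m \<and> Q (shift_down v w)}"
    then show "w \<in> shift_up v ` {u. u \<le> m \<and> Q u} \<union> {w. w = v \<and> Q v}"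
      using assms shift_up_shift_down[of w v]
      by (cases "w = v") (auto simp: shift_down_def intro!: image_eqI[of _ _ "shift_down v w"])
  qed (use assms in \<open>auto simp: shift_up_def shift_down_def\<close>)
  moreover have "v \<notin> shift_up v ` X" for X
    by (auto simp: shift_up_def)
  ultimately show ?thesis
    by (simp add: card_Un_disjoint card_image inj_on_subset[OF inj_shift_up] Collect_conj_eq)
qed

lemma card_children_slots_prepend:
  assumes "p \<in> permutations_of_set {0..<m}" and "v \<le> m"
  shows "card (children_slots P (prepend v p)) =
    card (active_slots P p) + (if v \<in> active_slots P p then 1 else 0)"
  using card_shift_down_preimage[OF assms(2), of "\<lambda>u. slot_ok P u p"] assms
  by (simp add: children_slots_def active_slots_def prepend_def slot_ok_map_shift_up
      length_permutations_of_set_atLeastLessThan)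

definition label :: "pattern3 \<Rightarrow> nat list \<Rightarrow> nat \<times> nat" where
  "label P p = (card (children_slots P p), card (active_slots P p))"

definition succ_labels :: "nat \<times> nat \<Rightarrow> (nat \<times> nat) multiset" where
  "succ_labels = (\<lambda>(k, b). replicate_mset (k - b) (b, b) + image_mset (Pair (Suc b)) (mset_set {2..<b + 2}))"

primrec level_labels :: "nat \<Rightarrow> (nat \<times> nat) multiset" where
  "level_labels 0 = {#(1, 1)#}"
| "level_labels (Suc m) = \<Sum>\<^sub># (image_mset succ_labels (level_labels m))"

definition follows_rule :: "pattern3 \<Rightarrow> bool" where
  "follows_rule P \<longleftrightarrow> (\<forall>m p. p \<in> permutations_of_set {0..<m} \<longrightarrow>
     bij_betw (\<lambda>v. card (active_slots P (prepend v p))) (active_slots P p) {2..<card (active_slots P p) + 2} \<and>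
     (\<forall>v \<in> children_slots P p - active_slots P p. card (active_slots P (prepend v p)) = card (active_slots P p)))"

lemma labels_of_children:
  assumes "follows_rule P" and p: "p \<in> permutations_of_set {0..<m}"
  shows "image_mset (\<lambda>v. label P (prepend v p)) (mset_set (children_slots P p)) = succ_labels (label P p)"
proof -
  define A where "A = active_slots P p"
  define V where "V = children_slots P p"
  define h where "h = (\<lambda>v. card (active_slots P (prepend v p)))"
  have "A \<subseteq> V" "finite V"
    unfolding A_def V_def using active_slots_subset_children_slots by (auto simp: children_slots_def)
  then have "finite A" by (rule finite_subset)
  have h: "bij_betw h A {2..<card A + 2}" "\<forall>v\<in>V - A. h v = card A"
    using assms unfolding follows_rule_def A_def V_def h_def by blast+
  have "v \<le> m" if "v \<in> V" for v
    using children_slots_le[OF p] that by (simp add: V_def)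
  then have lab: "label P (prepend v p) = (card A + (if v \<in> A then 1 else 0), h v)" if "v \<in> V" for v
    using card_children_slots_prepend[OF p] that by (simp add: label_def A_def h_def)
  have "image_mset (\<lambda>v. label P (prepend v p)) (mset_set A) = image_mset (Pair (Suc (card A))) (image_mset h (mset_set A))"
    using \<open>A \<subseteq> V\<close> \<open>finite A\<close> lab by (auto simp: multiset.map_comp intro!: image_mset_cong)
  also have "image_mset h (mset_set A) = mset_set {2..<card A + 2}"
    using h(1) by (simp add: bij_betw_def image_mset_mset_set)
  finally have active: "image_mset (\<lambda>v. label P (prepend v p)) (mset_set A) =
      image_mset (Pair (Suc (card A))) (mset_set {2..<card A + 2})" .
  have "image_mset (\<lambda>v. label P (prepend v p)) (mset_set (V - A)) = image_mset (\<lambda>_. (card A, card A)) (mset_set (V - A))"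
    using \<open>finite V\<close> lab h(2) by (intro image_mset_cong) auto
  also have "\<dots> = replicate_mset (card (V - A)) (card A, card A)"
    by (simp add: image_mset_const_eq)
  also have "card (V - A) = card V - card A"
    using \<open>A \<subseteq> V\<close> \<open>finite V\<close> by (simp add: card_Diff_subset finite_subset)
  finally have inactive: "image_mset (\<lambda>v. label P (prepend v p)) (mset_set (V - A)) =
      replicate_mset (card V - card A) (card A, card A)" .
  have "mset_set V = mset_set A + mset_set (V - A)"
    using \<open>A \<subseteq> V\<close> \<open>finite V\<close> by (metis Diff_partition finite_Diff finite_subset mset_set_Union Diff_disjoint)
  then show ?thesis
    unfolding V_def[symmetric] using active inactive
    by (simp add: succ_labels_def label_def A_def V_def add.commute)
qed

lemma mset_set_Sigma:
  assumes "finite I" and "\<And>i. i \<in> I \<Longrightarrow> finite (B i)"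
  shows "mset_set (Sigma I B) = (\<Sum>i\<in>I. image_mset (Pair i) (mset_set (B i)))"
  using assms
proof (induction I rule: finite_induct)
  case (insert x F)
  have "Sigma (insert x F) B = Pair x ` B x \<union> Sigma F B" "Pair x ` B x \<inter> Sigma F B = {}"
    using insert.hyps by auto
  then show ?case
    using insert by (simp add: mset_set_Union finite_SigmaI image_mset_mset_set inj_on_def)
qed simp

lemma image_mset_sum: "image_mset f (\<Sum>i\<in>I. M i) = (\<Sum>i\<in>I. image_mset f (M i))"
  by (induction I rule: infinite_finite_induct) simp_all

lemma finite_gap_avoiders: "finite (gap_avoiders P m)"
  by (simp add: gap_avoiders_def)

lemma labels_gap_avoiders:
  assumes "follows_rule P"
  shows "image_mset (label P) (mset_set (gap_avoiders P m)) = level_labels m"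
proof (induction m)
  case 0
  have "gap_avoiders P 0 = {[]}" "label P [] = (1, 1)"
    by (auto simp: gap_avoiders_def label_def children_slots_def active_slots_def slot_ok_iff_sorted_wrt)
  then show ?case by simp
next
  case (Suc m)
  let ?C = "SIGMA p:gap_avoiders P m. children_slots P p"
  have "finite (children_slots P p)" for p
    by (simp add: children_slots_def)
  then have "mset_set ((\<lambda>(p, v). prepend v p) ` ?C) = image_mset (\<lambda>(p, v). prepend v p) (mset_set ?C)"
    by (simp add: image_mset_mset_set inj_on_subset[OF inj_prepend])
  also have "mset_set ?C = (\<Sum>p\<in>gap_avoiders P m. image_mset (Pair p) (mset_set (children_slots P p)))"
    by (intro mset_set_Sigma finite_gap_avoiders \<open>finite (children_slots P _)\<close>)
  finally have "image_mset (label P) (mset_set (gap_avoiders P (Suc m))) =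
      (\<Sum>p\<in>gap_avoiders P m. image_mset (\<lambda>v. label P (prepend v p)) (mset_set (children_slots P p)))"
    by (simp add: gap_avoiders_Suc image_mset_sum multiset.map_comp o_def)
  also have "\<dots> = (\<Sum>p\<in>gap_avoiders P m. succ_labels (label P p))"
    using labels_of_children[OF assms] by (intro sum.cong) (auto simp: gap_avoiders_def)
  also have "\<dots> = level_labels (Suc m)"
    by (simp add: Suc.IH[symmetric] sum_unfold_sum_mset multiset.map_comp o_def)
  finally show ?case .
qed

lemma card_gap_avoiders_follows_rule:
  "follows_rule P \<Longrightarrow> card (gap_avoiders P m) = size (level_labels m)"
  using labels_gap_avoiders[of P m] by (metis size_image_mset size_mset_set)

section \<open>The patterns 123, 132 and 213 follow the succession rule\<close>

lemma (in linorder) bij_betw_card_atMost_rank: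
  assumes "finite A"
  shows "bij_betw (\<lambda>v. card {u\<in>A. u \<le> v}) A {1..card A}"
proof -
  let ?r = "\<lambda>v. card {u\<in>A. u \<le> v}"
  have less: "?r v < ?r w" if "v \<in> A" "w \<in> A" "v < w" for v w
  proof (rule psubset_card_mono)
    have "w \<notin> {u\<in>A. u \<le> v}" "w \<in> {u\<in>A. u \<le> w}"
      using that by auto
    moreover have "{u\<in>A. u \<le> v} \<subseteq> {u\<in>A. u \<le> w}"
      using that by auto
    ultimately show "{u\<in>A. u \<le> v} \<subset> {u\<in>A. u \<le> w}"
      by blast
  qed (use assms in simp)
  have "inj_on ?r A"
  proof (rule inj_onI)
    fix v w assume "v \<in> A" "w \<in> A" "?r v = ?r w"
    then show "v = w"
      using less[of v w] less[of w v] by (cases v w rule: linorder_cases) auto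
  qed
  moreover have "?r ` A \<subseteq> {1..card A}"
    using assms by (auto simp: Suc_le_eq card_gt_0_iff intro!: card_mono)
  ultimately show ?thesis
    by (simp add: bij_betw_def card_image card_subset_eq)
qed

lemmas bij_betw_card_atLeast_rank = linorder.bij_betw_card_atMost_rank[OF dual_linorder]

lemma set_map_shift_up:
  assumes "p \<in> permutations_of_set {0..<m}" and "v \<le> m"
  shows "set (map (shift_up v) p) = {0..<Suc m} - {v}"
  using assms shift_up_image by (simp add: permutations_of_set_def)

lemma active_slots_prepend:
  assumes p: "p \<in> permutations_of_set {0..<m}" and "v \<le> m"
  shows "active_slots P (prepend v p) = {w. w \<le> Suc m \<and> shift_down v w \<in> active_slots P p \<and>
    (\<forall>y\<le>m. y \<noteq> v \<longrightarrow> \<not> P (w \<le> v) (w \<le> y) (v < y))}"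
  using assms set_map_shift_up[OF assms]
  by (auto simp: active_slots_def prepend_def slot_ok_Cons slot_ok_map_shift_up shift_down_def
      length_permutations_of_set_atLeastLessThan less_Suc_eq_le)

lemma top_in_active_slots:
  assumes "p \<in> permutations_of_set {0..<m}" and "\<And>C. \<not> P False False C"
  shows "m \<in> active_slots P p"
proof -
  have "y < m" if "y \<in> set p" for y
    using assms(1) that by (auto simp: permutations_of_set_def)
  then have "slot_ok P m p"
    unfolding slot_ok_iff_sorted_wrt using assms(2)
    by (intro sorted_wrt_mono_rel[OF _ sorted_wrt_true]) (metis leD)
  then show ?thesis
    using assms(1) by (simp add: active_slots_def length_permutations_of_set_atLeastLessThan)
qed

lemma active_slots_above_inactive:
  assumes mono: "\<And>A B A' B' C. P A' B' C \<Longrightarrow> (A' \<longrightarrow> A) \<Longrightarrow> (B' \<longrightarrow> B) \<Longrightarrow> P A B C"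
    and "v \<le> length p" and "v \<notin> active_slots P p"
  shows "{u \<in> active_slots P p. v \<le> u} = active_slots P p"
proof -
  have "v \<le> u" if "u \<in> active_slots P p" for u
  proof (rule ccontr)
    assume "\<not> v \<le> u"
    have "slot_ok P u p"
      using that by (simp add: active_slots_def)
    then have "slot_ok P v p"
      unfolding slot_ok_iff_sorted_wrt
    proof (rule sorted_wrt_mono_rel[rotated])
      fix y z assume "\<not> P (u \<le> y) (u \<le> z) (y < z)"
      then show "\<not> P (v \<le> y) (v \<le> z) (y < z)"
        using mono[of "v \<le> y" "v \<le> z" "y < z" "u \<le> y" "u \<le> z"] \<open>\<not> v \<le> u\<close> by auto
    qed
    then show False
      using assms(2,3) by (simp add: active_slots_def)
  qed
  then show ?thesis
    by blast
qed

definition pat123 :: pattern3 where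
  "pat123 = (\<lambda>A B C. A \<and> C)"

definition pat132 :: pattern3 where
  "pat132 = (\<lambda>A B C. B \<and> \<not> C)"

definition pat213 :: pattern3 where
  "pat213 = (\<lambda>A B C. \<not> A \<and> B)"

lemma shift_down_preimage_above:
  assumes "\<And>u. u \<in> A \<Longrightarrow> u \<le> m"
  shows "{w. w \<le> Suc m \<and> shift_down v w \<in> A \<and> v < w} = Suc ` {u \<in> A. v \<le> u}"
proof (intro set_eqI iffI)
  fix w assume "w \<in> {w. w \<le> Suc m \<and> shift_down v w \<in> A \<and> v < w}"
  then show "w \<in> Suc ` {u \<in> A. v \<le> u}"
    by (intro image_eqI[of _ _ "w - 1"]) (auto simp: shift_down_def)
qed (use assms in \<open>auto simp: shift_down_def\<close>)

lemma card_active_slots_prepend_pat123: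
  assumes p: "p \<in> permutations_of_set {0..<m}" and "v \<le> m"
  shows "card (active_slots pat123 (prepend v p)) =
    (if v = m then Suc (card (active_slots pat123 p)) else card {u \<in> active_slots pat123 p. v \<le> u})"
proof -
  define A where "A = active_slots pat123 p"
  have A_le: "u \<le> m" if "u \<in> A" for u
    using active_slots_le[OF p] that by (simp add: A_def)
  have "m \<in> A"
    unfolding A_def by (rule top_in_active_slots[OF p]) (simp add: pat123_def)
  have "active_slots pat123 (prepend v p) = {w. w \<le> Suc m \<and> shift_down v w \<in> A \<and> \<not> (w \<le> v \<and> v < m)}"
    unfolding active_slots_prepend[OF assms] A_def using \<open>v \<le> m\<close> by (auto simp: pat123_def)
  moreover have "card {w. w \<le> Suc m \<and> shift_down m w \<in> A} = Suc (card A)"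
    using card_shift_down_preimage[of m m "\<lambda>u. u \<in> A"] \<open>m \<in> A\<close> A_le
    by (simp add: Collect_conj_eq Int_absorb1 subset_eq)
  ultimately show ?thesis
    using shift_down_preimage_above[of A m v, OF A_le] \<open>v \<le> m\<close>
    by (auto simp: card_image A_def[symmetric] not_le)
qed

lemma bij_betw_move_one_to_top:
  assumes "1 \<le> n"
  shows "bij_betw (\<lambda>x. if x = 1 then Suc n else x) {1..n} {2..<n + 2}"
  using assms
  by (auto simp: bij_betw_def inj_on_def image_iff intro: bexI[of _ 1] split: if_splits)

lemma follows_rule_pat123: "follows_rule pat123"
  unfolding follows_rule_def
proof (intro allI impI conjI)
  fix m :: nat and p :: "nat list" assume p: "p \<in> permutations_of_set {0..<m}"
  define A where "A = active_slots pat123 p"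
  define g where "g v = card {u \<in> A. v \<le> u}" for v
  have A_le: "u \<le> m" if "u \<in> A" for u
    using active_slots_le[OF p] that by (simp add: A_def)
  have "finite A"
    by (simp add: A_def finite_active_slots)
  have "m \<in> A"
    unfolding A_def by (rule top_in_active_slots[OF p]) (simp add: pat123_def)
  have g: "bij_betw g A {1..card A}"
    unfolding g_def by (rule bij_betw_card_atLeast_rank[OF \<open>finite A\<close>])
  have "{u \<in> A. m \<le> u} = {m}"
    using \<open>m \<in> A\<close> A_le by (auto intro: antisym)
  then have "g m = 1"
    by (simp add: g_def)
  (* The top slot m has rank 1; its child takes the new largest value card A + 1. *)
  have "v = m \<longleftrightarrow> g v = 1" if "v \<in> A" for v
    using g \<open>g m = 1\<close> \<open>m \<in> A\<close> that by (metis bij_betw_inv_into_left)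
  then have "card (active_slots pat123 (prepend v p)) = (if g v = 1 then Suc (card A) else g v)" if "v \<in> A" for v
    using card_active_slots_prepend_pat123[OF p A_le[OF that]] that by (simp add: A_def g_def)
  moreover have "bij_betw (\<lambda>x. if x = 1 then Suc (card A) else x) {1..card A} {2..<card A + 2}"
    using \<open>m \<in> A\<close> \<open>finite A\<close> by (intro bij_betw_move_one_to_top) (auto simp: Suc_le_eq card_gt_0_iff)
  ultimately show "bij_betw (\<lambda>v. card (active_slots pat123 (prepend v p))) (active_slots pat123 p)
      {2..<card (active_slots pat123 p) + 2}"
    using bij_betw_trans[OF g] unfolding A_def[symmetric] by (simp cong: bij_betw_cong)
  show "\<forall>v \<in> children_slots pat123 p - active_slots pat123 p.
      card (active_slots pat123 (prepend v p)) = card (active_slots pat123 p)"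
  proof
    fix v assume v: "v \<in> children_slots pat123 p - active_slots pat123 p"
    then have "v \<le> m" "v \<notin> A"
      using children_slots_le[OF p] by (auto simp: A_def)
    moreover have "{u \<in> A. v \<le> u} = A"
      using \<open>v \<le> m\<close> \<open>v \<notin> A\<close> p unfolding A_def
      by (intro active_slots_above_inactive) (auto simp: pat123_def length_permutations_of_set_atLeastLessThan)
    ultimately show "card (active_slots pat123 (prepend v p)) = card (active_slots pat123 p)"
      using card_active_slots_prepend_pat123[OF p \<open>v \<le> m\<close>] \<open>m \<in> A\<close> by (auto simp: A_def)
  qed
qed

lemma card_active_slots_prepend_pat132:
  assumes p: "p \<in> permutations_of_set {0..<m}" and "v \<le> m"
  shows "card (active_slots pat132 (prepend v p)) =
    (if v \<in> active_slots pat132 p then 1 else 0) + card {u \<in> active_slots pat132 p. v \<le> u}"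
proof -
  define A where "A = active_slots pat132 p"
  have A_le: "u \<le> m" if "u \<in> A" for u
    using active_slots_le[OF p] that by (simp add: A_def)
  have "(\<forall>y\<le>m. y \<noteq> v \<longrightarrow> \<not> pat132 (w \<le> v) (w \<le> y) (v < y)) \<longleftrightarrow> v \<le> w" for w
    using \<open>v \<le> m\<close> by (auto simp: pat132_def not_le dest: spec[of _ "v - 1"])
  then have "active_slots pat132 (prepend v p) = {w. w \<le> Suc m \<and> shift_down v w \<in> A \<and> v \<le> w}"
    unfolding active_slots_prepend[OF assms] A_def by simp
  also have "\<dots> = {w. w = v \<and> v \<in> A} \<union> {w. w \<le> Suc m \<and> shift_down v w \<in> A \<and> v < w}"
    using \<open>v \<le> m\<close> by (auto simp: shift_down_def)
  moreover have "finite A" "v \<notin> Suc ` {u \<in> A. v \<le> u}"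
    using A_le by (auto intro: finite_subset[of _ "{..m}"])
  ultimately show ?thesis
    using shift_down_preimage_above[of A m v, OF A_le] by (simp add: card_image A_def[symmetric])
qed

lemma follows_rule_pat132: "follows_rule pat132"
  unfolding follows_rule_def
proof (intro allI impI conjI)
  fix m :: nat and p :: "nat list" assume p: "p \<in> permutations_of_set {0..<m}"
  define A where "A = active_slots pat132 p"
  define g where "g v = card {u \<in> A. v \<le> u}" for v
  have A_le: "u \<le> m" if "u \<in> A" for u
    using active_slots_le[OF p] that by (simp add: A_def)
  have "finite A"
    by (simp add: A_def finite_active_slots)
  have "card (active_slots pat132 (prepend v p)) = Suc (g v)" if "v \<in> A" for v
    using card_active_slots_prepend_pat132[OF p A_le[OF that]] that by (simp add: A_def g_def)
  moreover have "bij_betw g A {1..card A}"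
    unfolding g_def by (rule bij_betw_card_atLeast_rank[OF \<open>finite A\<close>])
  then have "bij_betw (Suc \<circ> g) A {2..<card A + 2}"
    by (rule bij_betw_trans) (simp add: bij_betw_def image_Suc_atLeastAtMost atLeastLessThanSuc_atLeastAtMost)
  ultimately show "bij_betw (\<lambda>v. card (active_slots pat132 (prepend v p))) (active_slots pat132 p)
      {2..<card (active_slots pat132 p) + 2}"
    unfolding A_def[symmetric] by (simp cong: bij_betw_cong)
  show "\<forall>v \<in> children_slots pat132 p - active_slots pat132 p.
      card (active_slots pat132 (prepend v p)) = card (active_slots pat132 p)"
  proof
    fix v assume v: "v \<in> children_slots pat132 p - active_slots pat132 p"
    then have "v \<le> m" "v \<notin> A"
      using children_slots_le[OF p] by (auto simp: A_def)
    moreover have "{u \<in> A. v \<le> u} = A"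
      using \<open>v \<le> m\<close> \<open>v \<notin> A\<close> p unfolding A_def
      by (intro active_slots_above_inactive) (auto simp: pat132_def length_permutations_of_set_atLeastLessThan)
    ultimately show "card (active_slots pat132 (prepend v p)) = card (active_slots pat132 p)"
      using card_active_slots_prepend_pat132[OF p \<open>v \<le> m\<close>] by (simp add: A_def)
  qed
qed

lemma card_active_slots_prepend_pat213:
  assumes p: "p \<in> permutations_of_set {0..<m}" and "v \<le> m"
  shows "card (active_slots pat213 (prepend v p)) = Suc (card {u \<in> active_slots pat213 p. u \<le> v})"
proof -
  define A where "A = active_slots pat213 p"
  have A_le: "u \<le> m" if "u \<in> A" for u
    using active_slots_le[OF p] that by (simp add: A_def)
  have "m \<in> A"
    unfolding A_def by (rule top_in_active_slots[OF p]) (simp add: pat213_def)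
  have "(\<forall>y\<le>m. y \<noteq> v \<longrightarrow> \<not> pat213 (w \<le> v) (w \<le> y) (v < y)) \<longleftrightarrow> \<not> (v < w \<and> w \<le> m)" for w
    by (auto simp: pat213_def not_le)
  then have "active_slots pat213 (prepend v p) = {w. w \<le> Suc m \<and> shift_down v w \<in> A \<and> \<not> (v < w \<and> w \<le> m)}"
    unfolding active_slots_prepend[OF assms] A_def by simp
  also have "\<dots> = insert (Suc m) {u \<in> A. u \<le> v}"
    using \<open>v \<le> m\<close> \<open>m \<in> A\<close> by (auto simp: shift_down_def)
  moreover have "finite {u \<in> A. u \<le> v}"
    by simp
  ultimately show ?thesis
    using \<open>v \<le> m\<close> by (simp add: A_def[symmetric])
qed

(* An active slot u with v < u < m would head the occurrence x < u \<le> m - 1 in p = x # r,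
   where x < v \<le> y for some y in r witnesses that v is not active. *)
lemma active_slots_pat213_above_inactive:
  assumes p: "p \<in> permutations_of_set {0..<m}"
    and v: "v \<in> children_slots pat213 p" "v \<notin> active_slots pat213 p"
  shows "{u \<in> active_slots pat213 p. v < u} = {m}"
proof (intro equalityI subsetI)
  have "v \<le> m" "\<not> slot_ok pat213 v p" "slot_ok pat213 v (tl p)"
    using children_slots_le[OF p] v
    by (auto simp: active_slots_def children_slots_def length_permutations_of_set_atLeastLessThan[OF p])
  then obtain x r where "p = x # r" "x < v"
    by (cases p) (auto simp: slot_ok_Cons pat213_def not_le)
  fix u assume u: "u \<in> {u \<in> active_slots pat213 p. v < u}"
  show "u \<in> {m}"
  proof (rule ccontr)
    assume "u \<notin> {m}"
    then have "x < u" "u \<le> m - 1"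
      using u active_slots_le[OF p, of u pat213] \<open>x < v\<close> by auto
    moreover have "m - 1 \<in> set p"
      using p \<open>u \<le> m - 1\<close> \<open>x < u\<close> by (simp add: permutations_of_set_def)
    ultimately have "m - 1 \<in> set r"
      using \<open>p = x # r\<close> by auto
    then have "\<not> slot_ok pat213 u p"
      using \<open>p = x # r\<close> \<open>x < u\<close> \<open>u \<le> m - 1\<close> by (force simp: slot_ok_Cons pat213_def not_le)
    then show False
      using u by (simp add: active_slots_def)
  qed
next
  have "m \<in> active_slots pat213 p"
    by (rule top_in_active_slots[OF p]) (simp add: pat213_def)
  moreover have "v \<noteq> m"
    using calculation v(2) by auto
  then have "v < m"
    using children_slots_le[OF p v(1)] by simp
  ultimately show "u \<in> {u \<in> active_slots pat213 p. v < u}" if "u \<in> {m}" for u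
    using that by simp
qed

lemma follows_rule_pat213: "follows_rule pat213"
  unfolding follows_rule_def
proof (intro allI impI conjI)
  fix m :: nat and p :: "nat list" assume p: "p \<in> permutations_of_set {0..<m}"
  define A where "A = active_slots pat213 p"
  define g where "g v = card {u \<in> A. u \<le> v}" for v
  have A_le: "u \<le> m" if "u \<in> A" for u
    using active_slots_le[OF p] that by (simp add: A_def)
  have "finite A"
    by (simp add: A_def finite_active_slots)
  have "card (active_slots pat213 (prepend v p)) = Suc (g v)" if "v \<le> m" for v
    using card_active_slots_prepend_pat213[OF p that] by (simp add: A_def g_def)
  moreover have "bij_betw g A {1..card A}"
    unfolding g_def by (rule bij_betw_card_atMost_rank[OF \<open>finite A\<close>])
  then have "bij_betw (Suc \<circ> g) A {2..<card A + 2}"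
    by (rule bij_betw_trans) (simp add: bij_betw_def image_Suc_atLeastAtMost atLeastLessThanSuc_atLeastAtMost)
  ultimately show "bij_betw (\<lambda>v. card (active_slots pat213 (prepend v p))) (active_slots pat213 p)
      {2..<card (active_slots pat213 p) + 2}"
    unfolding A_def[symmetric] using A_le by (simp cong: bij_betw_cong)
  show "\<forall>v \<in> children_slots pat213 p - active_slots pat213 p.
      card (active_slots pat213 (prepend v p)) = card (active_slots pat213 p)"
  proof
    fix v assume v: "v \<in> children_slots pat213 p - active_slots pat213 p"
    then have "v \<le> m"
      using children_slots_le[OF p] by blast
    have "card A = g v + card {u \<in> A. v < u}"
      unfolding g_def using \<open>finite A\<close> by (subst card_Un_disjoint[symmetric]) (auto intro: arg_cong[where f = card])
    then show "card (active_slots pat213 (prepend v p)) = card (active_slots pat213 p)"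
      using card_active_slots_prepend_pat213[OF p \<open>v \<le> m\<close>] active_slots_pat213_above_inactive[OF p] v
      by (simp add: A_def g_def)
  qed
qed

section \<open>Symmetries and the six chain patterns\<close>

lemma card_filter_bij_betw:
  assumes "bij_betw f A B"
  shows "card {y \<in> B. Q y} = card {x \<in> A. Q (f x)}"
proof -
  have "bij_betw f {x \<in> A. Q (f x)} {y \<in> B. Q y}"
    by (rule bij_betw_subset[OF assms]) (use assms in \<open>auto simp: bij_betw_def\<close>)
  then show ?thesis
    by (simp add: bij_betw_same_card)
qed

lemma bij_betw_map_permutations_of_set:
  assumes "bij_betw f A B"
  shows "bij_betw (map f) (permutations_of_set A) (permutations_of_set B)"
proof (rule bij_betwI')
  fix xs ys assume "xs \<in> permutations_of_set A" "ys \<in> permutations_of_set A"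
  then show "map f xs = map f ys \<longleftrightarrow> xs = ys"
    using assms by (intro inj_on_map_eq_map) (auto simp: bij_betw_def permutations_of_set_def intro: inj_on_subset)
next
  show "map f xs \<in> permutations_of_set B" if "xs \<in> permutations_of_set A" for xs
    using that assms permutations_of_set_image_inj[of f A] by (auto simp: bij_betw_def)
  show "\<exists>xs\<in>permutations_of_set A. ys = map f xs" if "ys \<in> permutations_of_set B" for ys
    using that assms permutations_of_set_image_inj[of f A] by (auto simp: bij_betw_def)
qed

lemma card_gap_avoiders_complement:
  "card (gap_avoiders (complement P) m) = card (gap_avoiders P m)"
proof -
  let ?f = "\<lambda>x. m - 1 - x"
  have "bij_betw ?f {0..<m} {0..<m}"
    by (rule bij_betwI[of _ _ _ ?f]) auto
  then have "card (gap_avoiders P m) =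
      card {xs \<in> permutations_of_set {0..<m}. \<not> gapped_occurs P (map ?f xs)}"
    unfolding gap_avoiders_def by (rule card_filter_bij_betw[OF bij_betw_map_permutations_of_set])
  also have "\<dots> = card (gap_avoiders (complement P) m)"
    unfolding gap_avoiders_def
    by (intro arg_cong[where f = card] Collect_cong conj_cong refl arg_cong[where f = Not]
        gapped_occurs_map_antimono) (auto simp: permutations_of_set_def)
  finally show ?thesis ..
qed

lemma card_gap_avoiders_order_iso:
  assumes "finite S"
  shows "card {ys \<in> permutations_of_set S. \<not> gapped_occurs P ys} = card (gap_avoiders P (card S))"
proof -
  define xs where "xs = sorted_list_of_set S"
  have "sorted_wrt (<) xs" "length xs = card S" "set xs = S" "distinct xs"
    using assms by (simp_all add: xs_def strict_sorted_list_of_set)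
  then have iso: "bij_betw ((!) xs) {0..<card S} S"
    by (intro bij_betw_nth) auto
  have mono: "xs ! i < xs ! j \<longleftrightarrow> i < j" if "i < card S" "j < card S" for i j
    using that \<open>sorted_wrt (<) xs\<close> \<open>length xs = card S\<close>
    by (cases i j rule: linorder_cases) (auto dest: sorted_wrt_nth_less)
  have "card {ys \<in> permutations_of_set S. \<not> gapped_occurs P ys} =
      card {zs \<in> permutations_of_set {0..<card S}. \<not> gapped_occurs P (map ((!) xs) zs)}"
    by (rule card_filter_bij_betw[OF bij_betw_map_permutations_of_set[OF iso]])
  also have "\<dots> = card (gap_avoiders P (card S))"
    unfolding gap_avoiders_def
    by (intro arg_cong[where f = card] Collect_cong conj_cong refl arg_cong[where f = Not]
        gapped_occurs_map_mono) (auto simp: permutations_of_set_def mono)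
  finally show ?thesis .
qed

(* For an occurrence at positions 1, 3, 4 with comparison outcomes A = (x1 < x3), B = (x1 < x4),
   C = (x3 < x4): whether the entry at position p is smaller than the one at position q. *)
definition entry_less :: "bool \<Rightarrow> bool \<Rightarrow> bool \<Rightarrow> nat \<Rightarrow> nat \<Rightarrow> bool" where
  "entry_less A B C p q =
     (if (p, q) = (1, 3) then A else if (p, q) = (3, 1) then \<not> A
      else if (p, q) = (1, 4) then B else if (p, q) = (4, 1) then \<not> B
      else if (p, q) = (3, 4) then C else \<not> C)"

definition chain_pattern :: "nat \<Rightarrow> nat \<Rightarrow> nat \<Rightarrow> pattern3" where
  "chain_pattern a b c = (\<lambda>A B C. entry_less A B C c b \<and> entry_less A B C b a)"

lemma entry_less_iff:
  fixes V :: "nat \<Rightarrow> 'a::linorder"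
  assumes "inj_on V {1, 3, 4}" and "p \<in> {1, 3, 4}" "q \<in> {1, 3, 4}" "p \<noteq> q"
  shows "entry_less (V 1 < V 3) (V 1 < V 4) (V 3 < V 4) p q \<longleftrightarrow> V p < V q"
proof -
  have "V 1 \<noteq> V 3" "V 1 \<noteq> V 4" "V 3 \<noteq> V 4"
    using assms(1) by (auto dest: inj_onD)
  then show ?thesis
    using assms(2-4) by (auto simp: entry_less_def)
qed

lemma chain_pattern_iff:
  fixes V :: "nat \<Rightarrow> 'a::linorder"
  assumes "a \<in> {1, 3, 4}" "b \<in> {1, 3, 4}" "c \<in> {1, 3, 4}" "distinct [a, b, c]" and "inj_on V {1, 3, 4}"
  shows "chain_pattern a b c (V 1 < V 3) (V 1 < V 4) (V 3 < V 4) \<longleftrightarrow> V c < V b \<and> V b < V a"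
proof -
  have "entry_less (V 1 < V 3) (V 1 < V 4) (V 3 < V 4) c b \<longleftrightarrow> V c < V b"
    "entry_less (V 1 < V 3) (V 1 < V 4) (V 3 < V 4) b a \<longleftrightarrow> V b < V a"
    by (rule entry_less_iff[OF assms(5)]; use assms(1-4) in simp)+
  then show ?thesis
    by (simp add: chain_pattern_def)
qed

lemma entry_less_complement:
  assumes "p \<in> {1, 3, 4}" "q \<in> {1, 3, 4}" "p \<noteq> q"
  shows "entry_less (\<not> A) (\<not> B) (\<not> C) p q \<longleftrightarrow> entry_less A B C q p"
  using assms by (elim insertE emptyE; simp add: entry_less_def)

lemma complement_chain_pattern:
  assumes "a \<in> {1, 3, 4}" "b \<in> {1, 3, 4}" "c \<in> {1, 3, 4}" "distinct [a, b, c]"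
  shows "complement (chain_pattern a b c) = chain_pattern c b a"
  using assms by (simp add: fun_eq_iff complement_def chain_pattern_def entry_less_complement) blast

lemma chain_pattern_base_cases:
  "chain_pattern 4 3 1 = pat123" "chain_pattern 3 4 1 = pat132" "chain_pattern 4 1 3 = pat213"
  by (simp_all add: fun_eq_iff chain_pattern_def entry_less_def pat123_def pat132_def pat213_def)

lemma card_gap_avoiders_chain_pattern:
  assumes "a \<in> {1, 3, 4}" "b \<in> {1, 3, 4}" "c \<in> {1, 3, 4}" "distinct [a, b, c]"
  shows "card (gap_avoiders (chain_pattern a b c) m) = size (level_labels m)"
proof -
  have base: "card (gap_avoiders (chain_pattern a b c) m) = size (level_labels m)"
    if "(a, b, c) \<in> {(4, 3, 1), (3, 4, 1), (4, 1, 3)}" for a b c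
    using that chain_pattern_base_cases follows_rule_pat123 follows_rule_pat132 follows_rule_pat213
    by (auto simp: card_gap_avoiders_follows_rule)
  have "(a, b, c) \<in> {(4, 3, 1), (3, 4, 1), (4, 1, 3)} \<or> (c, b, a) \<in> {(4, 3, 1), (3, 4, 1), (4, 1, 3)}"
    using assms by auto
  then show ?thesis
  proof
    assume "(c, b, a) \<in> {(4, 3, 1), (3, 4, 1), (4, 1, 3)}"
    moreover have "chain_pattern a b c = complement (chain_pattern c b a)"
      using assms by (simp add: complement_chain_pattern)
    ultimately show ?thesis
      using base[of c b a] by (simp add: card_gap_avoiders_complement)
  qed (rule base)
qed

section \<open>From the POPs to gapped patterns, and counting\<close>

lemma strict_mono_on_five:
  fixes \<iota> :: "nat \<Rightarrow> nat"
  shows "strict_mono_on {1..5} \<iota> \<longleftrightarrow> \<iota> 1 < \<iota> 2 \<and> \<iota> 2 < \<iota> 3 \<and> \<iota> 3 < \<iota> 4 \<and> \<iota> 4 < \<iota> 5"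
proof -
  have "{1..5::nat} = {1, 2, 3, 4, 5}"
    by auto
  then show ?thesis
    unfolding strict_mono_on_def by auto
qed

lemma contains_pop_pop5_iff:
  assumes "{a, b, c} \<subseteq> {1..5}"
  shows "contains_pop (pop5 a b c d e) 5 n \<pi> \<longleftrightarrow>
    (\<exists>\<iota>. strict_mono_on {1..5} \<iota> \<and> \<iota> ` {1..5} \<subseteq> {1..n} \<and> \<pi> (\<iota> c) < \<pi> (\<iota> b) \<and> \<pi> (\<iota> b) < \<pi> (\<iota> a))"
  using assms unfolding contains_pop_def pop5_def by (auto intro: less_trans)

lemma chain_pattern_at_positions:
  fixes \<pi> :: "nat \<Rightarrow> 'a::linorder" and \<iota> :: "nat \<Rightarrow> nat"
  assumes "a \<in> {1, 3, 4}" "b \<in> {1, 3, 4}" "c \<in> {1, 3, 4}" "distinct [a, b, c]"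
    and "inj \<pi>" and "distinct [\<iota> 1, \<iota> 3, \<iota> 4]"
  shows "chain_pattern a b c (\<pi> (\<iota> 1) < \<pi> (\<iota> 3)) (\<pi> (\<iota> 1) < \<pi> (\<iota> 4)) (\<pi> (\<iota> 3) < \<pi> (\<iota> 4)) \<longleftrightarrow>
    \<pi> (\<iota> c) < \<pi> (\<iota> b) \<and> \<pi> (\<iota> b) < \<pi> (\<iota> a)"
proof -
  have "inj_on \<iota> {1, 3, 4}"
    using assms(6) by (auto simp: inj_on_def)
  then have "inj_on (\<pi> \<circ> \<iota>) {1, 3, 4}"
    using inj_on_subset[OF assms(5) subset_UNIV] by (rule comp_inj_on)
  then show ?thesis
    using chain_pattern_iff[OF assms(1-4), of "\<pi> \<circ> \<iota>"] by simp
qed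

lemma gapped_occurs_prefix_if_contains_pop5:
  assumes abc: "a \<in> {1, 3, 4}" "b \<in> {1, 3, 4}" "c \<in> {1, 3, 4}" "distinct [a, b, c]"
    and "\<pi> permutes {1..n}" and "contains_pop (pop5 a b c d e) 5 n \<pi>"
  shows "gapped_occurs (chain_pattern a b c) (map \<pi> [1..<n])"
proof -
  let ?xs = "map \<pi> [1..<n]"
  obtain \<iota> where mono: "strict_mono_on {1..5} \<iota>" and range: "\<iota> ` {1..5} \<subseteq> {1..n}"
    and chain: "\<pi> (\<iota> c) < \<pi> (\<iota> b)" "\<pi> (\<iota> b) < \<pi> (\<iota> a)"
    using assms(6) contains_pop_pop5_iff[of a b c] abc by auto
  have s: "\<iota> 1 < \<iota> 2" "\<iota> 2 < \<iota> 3" "\<iota> 3 < \<iota> 4" "\<iota> 4 < \<iota> 5"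
    using mono unfolding strict_mono_on_five by simp_all
  have "1 \<le> \<iota> 1" "\<iota> 5 \<le> n"
    using range by (auto simp: image_subset_iff)
  moreover have "?xs ! (\<iota> q - 1) = \<pi> (\<iota> q)" if "q \<in> {1, 3, 4}" for q
    using that s \<open>1 \<le> \<iota> 1\<close> \<open>\<iota> 5 \<le> n\<close> by auto
  ultimately have "chain_pattern a b c (?xs ! (\<iota> 1 - 1) < ?xs ! (\<iota> 3 - 1)) (?xs ! (\<iota> 1 - 1) < ?xs ! (\<iota> 4 - 1))
      (?xs ! (\<iota> 3 - 1) < ?xs ! (\<iota> 4 - 1))"
    using chain_pattern_at_positions[OF abc permutes_inj[OF assms(5)], of \<iota>] s chain by auto
  then show ?thesis
    unfolding gapped_occurs_def using s \<open>1 \<le> \<iota> 1\<close> \<open>\<iota> 5 \<le> n\<close>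
    by (intro exI[of _ "\<iota> 1 - 1"] exI[of _ "\<iota> 3 - 1"] exI[of _ "\<iota> 4 - 1"]) auto
qed

lemma contains_pop5_if_gapped_occurs_prefix:
  assumes abc: "a \<in> {1, 3, 4}" "b \<in> {1, 3, 4}" "c \<in> {1, 3, 4}" "distinct [a, b, c]"
    and "\<pi> permutes {1..n}" and "gapped_occurs (chain_pattern a b c) (map \<pi> [1..<n])"
  shows "contains_pop (pop5 a b c d e) 5 n \<pi>"
proof -
  let ?xs = "map \<pi> [1..<n]"
  obtain i k l where ikl: "i + 2 \<le> k" "k < l" "l < n - 1"
    and P: "chain_pattern a b c (?xs ! i < ?xs ! k) (?xs ! i < ?xs ! l) (?xs ! k < ?xs ! l)"
    using assms(6) unfolding gapped_occurs_def by auto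
  define \<iota> :: "nat \<Rightarrow> nat" where "\<iota> q = (if q = 1 then i + 1 else if q = 2 then i + 2 else if q = 3 then k + 1
    else if q = 4 then l + 1 else l + 2)" for q
  have mono: "strict_mono_on {1..5} \<iota>"
    unfolding strict_mono_on_five using ikl by (simp add: \<iota>_def)
  have range: "\<iota> ` {1..5} \<subseteq> {1..n}"
    using ikl by (auto simp: \<iota>_def)
  have "?xs ! i = \<pi> (\<iota> 1)" "?xs ! k = \<pi> (\<iota> 3)" "?xs ! l = \<pi> (\<iota> 4)"
    using ikl by (simp_all add: \<iota>_def)
  moreover have "distinct [\<iota> 1, \<iota> 3, \<iota> 4]"
    using ikl by (auto simp: \<iota>_def)
  ultimately have "\<pi> (\<iota> c) < \<pi> (\<iota> b) \<and> \<pi> (\<iota> b) < \<pi> (\<iota> a)"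
    using P chain_pattern_at_positions[OF abc permutes_inj[OF assms(5)], of \<iota>] by simp
  then show ?thesis
    using contains_pop_pop5_iff[of a b c] abc mono range by auto
qed

lemma contains_pop_pop5_iff_gapped_prefix:
  assumes "a \<in> {1, 3, 4}" "b \<in> {1, 3, 4}" "c \<in> {1, 3, 4}" "distinct [a, b, c]" and "\<pi> permutes {1..n}"
  shows "contains_pop (pop5 a b c d e) 5 n \<pi> \<longleftrightarrow> gapped_occurs (chain_pattern a b c) (map \<pi> [1..<n])"
  using gapped_occurs_prefix_if_contains_pop5[OF assms] contains_pop5_if_gapped_occurs_prefix[OF assms] by blast

lemma nth_rev_map_upt:
  assumes "j < n - 1"
  shows "rev (map f [1..<n]) ! j = f (n - 1 - j)"
proof -
  have "Suc (n - Suc (Suc j)) = n - Suc j"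
    using assms by simp
  then show ?thesis
    using assms by (simp add: rev_nth)
qed

(* Reading the prefix backwards sends chain position q to position 5 - q. *)
lemma chain_pattern_at_reversed_positions:
  fixes \<pi> :: "nat \<Rightarrow> 'a::linorder" and \<iota> :: "nat \<Rightarrow> nat"
  assumes abc: "a \<in> {1, 2, 4}" "b \<in> {1, 2, 4}" "c \<in> {1, 2, 4}" "distinct [a, b, c]"
    and "inj \<pi>" and "distinct [\<iota> 4, \<iota> 2, \<iota> 1]"
  shows "chain_pattern (5 - a) (5 - b) (5 - c) (\<pi> (\<iota> 4) < \<pi> (\<iota> 2)) (\<pi> (\<iota> 4) < \<pi> (\<iota> 1)) (\<pi> (\<iota> 2) < \<pi> (\<iota> 1))
    \<longleftrightarrow> \<pi> (\<iota> c) < \<pi> (\<iota> b) \<and> \<pi> (\<iota> b) < \<pi> (\<iota> a)"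
proof -
  have abc': "5 - a \<in> {1, 3, 4}" "5 - b \<in> {1, 3, 4}" "5 - c \<in> {1, 3, 4}" "distinct [5 - a, 5 - b, 5 - c]"
    using abc by auto
  have "distinct [(\<lambda>q. \<iota> (5 - q)) 1, (\<lambda>q. \<iota> (5 - q)) 3, (\<lambda>q. \<iota> (5 - q)) 4]"
    using assms(6) by auto
  from chain_pattern_at_positions[OF abc' assms(5) this]
  have "chain_pattern (5 - a) (5 - b) (5 - c) (\<pi> (\<iota> 4) < \<pi> (\<iota> 2)) (\<pi> (\<iota> 4) < \<pi> (\<iota> 1)) (\<pi> (\<iota> 2) < \<pi> (\<iota> 1))
    \<longleftrightarrow> \<pi> (\<iota> (5 - (5 - c))) < \<pi> (\<iota> (5 - (5 - b))) \<and> \<pi> (\<iota> (5 - (5 - b))) < \<pi> (\<iota> (5 - (5 - a)))"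
    by simp
  moreover have "5 - (5 - a) = a" "5 - (5 - b) = b" "5 - (5 - c) = c"
    using abc by auto
  ultimately show ?thesis
    by simp
qed

lemma gapped_occurs_rev_prefix_if_contains_pop5:
  assumes abc: "a \<in> {1, 2, 4}" "b \<in> {1, 2, 4}" "c \<in> {1, 2, 4}" "distinct [a, b, c]"
    and "\<pi> permutes {1..n}" and "contains_pop (pop5 a b c d e) 5 n \<pi>"
  shows "gapped_occurs (chain_pattern (5 - a) (5 - b) (5 - c)) (rev (map \<pi> [1..<n]))"
proof -
  let ?xs = "rev (map \<pi> [1..<n])"
  obtain \<iota> where mono: "strict_mono_on {1..5} \<iota>" and range: "\<iota> ` {1..5} \<subseteq> {1..n}"
    and chain: "\<pi> (\<iota> c) < \<pi> (\<iota> b)" "\<pi> (\<iota> b) < \<pi> (\<iota> a)"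
    using assms(6) contains_pop_pop5_iff[of a b c] abc by auto
  have s: "\<iota> 1 < \<iota> 2" "\<iota> 2 < \<iota> 3" "\<iota> 3 < \<iota> 4" "\<iota> 4 < \<iota> 5"
    using mono unfolding strict_mono_on_five by simp_all
  have "1 \<le> \<iota> 1" "\<iota> 5 \<le> n"
    using range by (auto simp: image_subset_iff)
  have "distinct [\<iota> 4, \<iota> 2, \<iota> 1]"
    using s by simp
  then have "chain_pattern (5 - a) (5 - b) (5 - c) (\<pi> (\<iota> 4) < \<pi> (\<iota> 2)) (\<pi> (\<iota> 4) < \<pi> (\<iota> 1))
      (\<pi> (\<iota> 2) < \<pi> (\<iota> 1))"
    using chain_pattern_at_reversed_positions[OF abc permutes_inj[OF assms(5)]] chain by blast
  moreover have "?xs ! (n - 1 - \<iota> q) = \<pi> (\<iota> q)" if "1 \<le> \<iota> q" "\<iota> q < n" for q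
    using nth_rev_map_upt[of "n - 1 - \<iota> q" n \<pi>] that by simp
  then have "?xs ! (n - 1 - \<iota> 4) = \<pi> (\<iota> 4)" "?xs ! (n - 1 - \<iota> 2) = \<pi> (\<iota> 2)" "?xs ! (n - 1 - \<iota> 1) = \<pi> (\<iota> 1)"
    using s \<open>1 \<le> \<iota> 1\<close> \<open>\<iota> 5 \<le> n\<close> by simp_all
  ultimately show ?thesis
    unfolding gapped_occurs_def using s \<open>1 \<le> \<iota> 1\<close> \<open>\<iota> 5 \<le> n\<close>
    by (intro exI[of _ "n - 1 - \<iota> 4"] exI[of _ "n - 1 - \<iota> 2"] exI[of _ "n - 1 - \<iota> 1"]) auto
qed

lemma contains_pop5_if_gapped_occurs_rev_prefix:
  assumes abc: "a \<in> {1, 2, 4}" "b \<in> {1, 2, 4}" "c \<in> {1, 2, 4}" "distinct [a, b, c]"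
    and "\<pi> permutes {1..n}" and "gapped_occurs (chain_pattern (5 - a) (5 - b) (5 - c)) (rev (map \<pi> [1..<n]))"
  shows "contains_pop (pop5 a b c d e) 5 n \<pi>"
proof -
  let ?xs = "rev (map \<pi> [1..<n])"
  obtain i k l where ikl: "i + 2 \<le> k" "k < l" "l < n - 1"
    and P: "chain_pattern (5 - a) (5 - b) (5 - c) (?xs ! i < ?xs ! k) (?xs ! i < ?xs ! l) (?xs ! k < ?xs ! l)"
    using assms(6) unfolding gapped_occurs_def by auto
  define \<iota> :: "nat \<Rightarrow> nat" where "\<iota> q = (if q = 1 then n - 1 - l else if q = 2 then n - 1 - k
    else if q = 3 then n - k else if q = 4 then n - 1 - i else n - i)" for q
  have mono: "strict_mono_on {1..5} \<iota>"
    unfolding strict_mono_on_five using ikl by (simp add: \<iota>_def) linarith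
  have range: "\<iota> ` {1..5} \<subseteq> {1..n}"
    using ikl by (auto simp: \<iota>_def)
  have "?xs ! i = \<pi> (\<iota> 4)" "?xs ! k = \<pi> (\<iota> 2)" "?xs ! l = \<pi> (\<iota> 1)"
    using ikl nth_rev_map_upt[of i n \<pi>] nth_rev_map_upt[of k n \<pi>] nth_rev_map_upt[of l n \<pi>]
    by (simp_all add: \<iota>_def)
  moreover have "distinct [\<iota> 4, \<iota> 2, \<iota> 1]"
    using ikl by (auto simp: \<iota>_def)
  ultimately have "\<pi> (\<iota> c) < \<pi> (\<iota> b) \<and> \<pi> (\<iota> b) < \<pi> (\<iota> a)"
    using P chain_pattern_at_reversed_positions[OF abc permutes_inj[OF assms(5)], of \<iota>] by simp
  then show ?thesis
    using contains_pop_pop5_iff[of a b c] abc mono range by auto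
qed

lemma contains_pop_pop5_iff_gapped_rev_prefix:
  assumes "a \<in> {1, 2, 4}" "b \<in> {1, 2, 4}" "c \<in> {1, 2, 4}" "distinct [a, b, c]" and "\<pi> permutes {1..n}"
  shows "contains_pop (pop5 a b c d e) 5 n \<pi> \<longleftrightarrow>
    gapped_occurs (chain_pattern (5 - a) (5 - b) (5 - c)) (rev (map \<pi> [1..<n]))"
  using gapped_occurs_rev_prefix_if_contains_pop5[OF assms] contains_pop5_if_gapped_occurs_rev_prefix[OF assms]
  by blast

lemma bij_betw_map_permutes:
  assumes "distinct xs"
  shows "bij_betw (\<lambda>\<pi>. map \<pi> xs) {\<pi>. \<pi> permutes set xs} (permutations_of_set (set xs))"
proof -
  have inj: "inj_on (\<lambda>\<pi>. map \<pi> xs) {\<pi>. \<pi> permutes set xs}"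
  proof (rule inj_onI, rule ext)
    fix \<pi> \<sigma> x assume "\<pi> \<in> {\<pi>. \<pi> permutes set xs}" "\<sigma> \<in> {\<pi>. \<pi> permutes set xs}" "map \<pi> xs = map \<sigma> xs"
    then show "\<pi> x = \<sigma> x"
      by (cases "x \<in> set xs") (auto simp: permutes_not_in)
  qed
  have "(\<lambda>\<pi>. map \<pi> xs) ` {\<pi>. \<pi> permutes set xs} \<subseteq> permutations_of_set (set xs)"
    using assms by (auto simp: permutations_of_set_def permutes_image distinct_map permutes_inj_on)
  moreover have "card {\<pi>. \<pi> permutes set xs} = card (permutations_of_set (set xs))"
    by (simp add: card_permutations)
  ultimately show ?thesis
    using inj by (simp add: bij_betw_def card_image card_subset_eq)
qed

lemma card_permutations_of_set_tl:
  assumes "finite S" and "S \<noteq> {}"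
  shows "card {xs \<in> permutations_of_set S. R (tl xs)} = (\<Sum>r\<in>S. card {ys \<in> permutations_of_set (S - {r}). R ys})"
proof -
  have "{xs \<in> permutations_of_set S. R (tl xs)} = (\<Union>r\<in>S. (#) r ` {ys \<in> permutations_of_set (S - {r}). R ys})"
    by (subst permutations_of_set_nonempty[OF assms(2)]) auto
  also have "card \<dots> = (\<Sum>r\<in>S. card ((#) r ` {ys \<in> permutations_of_set (S - {r}). R ys}))"
    using assms(1) by (intro card_UN_disjoint) auto
  finally show ?thesis
    by (simp add: card_image)
qed

lemma bij_betw_rev_permutations_of_set: "bij_betw rev (permutations_of_set A) (permutations_of_set A)"
  by (rule bij_betwI[of _ _ _ rev]) (auto simp: permutations_of_set_def)

lemma card_permutations_of_set_butlast:
  assumes "finite S" and "S \<noteq> {}"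
  shows "card {xs \<in> permutations_of_set S. R (butlast xs)} = (\<Sum>r\<in>S. card {ys \<in> permutations_of_set (S - {r}). R ys})"
proof -
  have "card {xs \<in> permutations_of_set S. R (butlast xs)} = card {xs \<in> permutations_of_set S. R (rev (tl xs))}"
    using card_filter_bij_betw[OF bij_betw_rev_permutations_of_set, of S "\<lambda>xs. R (butlast xs)"] by simp
  also have "\<dots> = (\<Sum>r\<in>S. card {ys \<in> permutations_of_set (S - {r}). R (rev ys)})"
    by (rule card_permutations_of_set_tl[OF assms])
  also have "\<dots> = (\<Sum>r\<in>S. card {ys \<in> permutations_of_set (S - {r}). R ys})"
    by (intro sum.cong refl card_filter_bij_betw[OF bij_betw_rev_permutations_of_set, symmetric])
  finally show ?thesis .
qed

lemma card_avoiders_last_entry_free: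
  assumes "1 \<le> n" and "\<And>\<pi>. \<pi> permutes {1..n} \<Longrightarrow> contains_pop P k n \<pi> \<longleftrightarrow> \<Phi> (map \<pi> [1..<n])"
  shows "card (avoiders P k n) = (\<Sum>r\<in>{1..n}. card {ys \<in> permutations_of_set ({1..n} - {r}). \<not> \<Phi> ys})"
proof -
  have "set [1..<Suc n] = {1..n}"
    by auto
  have "butlast (map \<pi> [1..<Suc n]) = map \<pi> [1..<n]" for \<pi> :: "nat \<Rightarrow> nat"
    using assms(1) by (simp add: map_butlast)
  then have "card (avoiders P k n) = card {\<pi>. \<pi> permutes set [1..<Suc n] \<and> \<not> \<Phi> (butlast (map \<pi> [1..<Suc n]))}"
    unfolding avoiders_def \<open>set [1..<Suc n] = {1..n}\<close> using assms(2) by (intro arg_cong[where f = card] Collect_cong) auto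
  also have "\<dots> = card {xs \<in> permutations_of_set {1..n}. \<not> \<Phi> (butlast xs)}"
    using card_filter_bij_betw[OF bij_betw_map_permutes[of "[1..<Suc n]"], of "\<lambda>xs. \<not> \<Phi> (butlast xs)"]
      \<open>set [1..<Suc n] = {1..n}\<close> by (simp add: Collect_conj_eq Int_commute)
  also have "\<dots> = (\<Sum>r\<in>{1..n}. card {ys \<in> permutations_of_set ({1..n} - {r}). \<not> \<Phi> ys})"
    using assms(1) by (intro card_permutations_of_set_butlast) auto
  finally show ?thesis .
qed

lemma sum_card_gap_avoiders:
  "(\<Sum>r\<in>{1..n}. card {ys \<in> permutations_of_set ({1..n} - {r}). \<not> gapped_occurs P ys}) =
    n * card (gap_avoiders P (n - 1))"
  by (simp add: card_gap_avoiders_order_iso)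

lemma card_avoiders_pop5_isolated_2_5:
  assumes abc: "a \<in> {1, 3, 4}" "b \<in> {1, 3, 4}" "c \<in> {1, 3, 4}" "distinct [a, b, c]" and "1 \<le> n"
  shows "card (avoiders (pop5 a b c d e) 5 n) = n * size (level_labels (n - 1))"
proof -
  have "card (avoiders (pop5 a b c d e) 5 n) =
      (\<Sum>r\<in>{1..n}. card {ys \<in> permutations_of_set ({1..n} - {r}). \<not> gapped_occurs (chain_pattern a b c) ys})"
    by (intro card_avoiders_last_entry_free[OF \<open>1 \<le> n\<close>] contains_pop_pop5_iff_gapped_prefix abc)
  also have "\<dots> = n * card (gap_avoiders (chain_pattern a b c) (n - 1))"
    by (rule sum_card_gap_avoiders)
  also have "\<dots> = n * size (level_labels (n - 1))"
    using abc by (simp add: card_gap_avoiders_chain_pattern)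
  finally show ?thesis .
qed

lemma card_avoiders_pop5_isolated_3_5:
  assumes abc: "a \<in> {1, 2, 4}" "b \<in> {1, 2, 4}" "c \<in> {1, 2, 4}" "distinct [a, b, c]" and "1 \<le> n"
  shows "card (avoiders (pop5 a b c d e) 5 n) = n * size (level_labels (n - 1))"
proof -
  let ?P = "chain_pattern (5 - a) (5 - b) (5 - c)"
  have "card (avoiders (pop5 a b c d e) 5 n) =
      (\<Sum>r\<in>{1..n}. card {ys \<in> permutations_of_set ({1..n} - {r}). \<not> gapped_occurs ?P (rev ys)})"
    by (rule card_avoiders_last_entry_free[OF \<open>1 \<le> n\<close> contains_pop_pop5_iff_gapped_rev_prefix[OF abc]])
  also have "\<dots> = (\<Sum>r\<in>{1..n}. card {ys \<in> permutations_of_set ({1..n} - {r}). \<not> gapped_occurs ?P ys})"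
    by (intro sum.cong refl card_filter_bij_betw[OF bij_betw_rev_permutations_of_set, symmetric])
  also have "\<dots> = n * card (gap_avoiders ?P (n - 1))"
    by (rule sum_card_gap_avoiders)
  also have "\<dots> = n * size (level_labels (n - 1))"
    using abc by (auto simp: card_gap_avoiders_chain_pattern)
  finally show ?thesis .
qed

lemma card_avoiders_pop5:
  fixes a b c d e :: nat
  assumes abcde: "{a, b, c, d, e} = {1..5}" and de: "{d, e} = {2, 5} \<or> {d, e} = {3, 5}" and "1 \<le> n"
  shows "card (avoiders (pop5 a b c d e) 5 n) = n * size (level_labels (n - 1))"
proof -
  have "card (set [a, b, c, d, e]) = length [a, b, c, d, e]"
    using abcde by simp
  then have "distinct [a, b, c, d, e]"
    by (rule card_distinct)
  then have abc: "a \<notin> {d, e}" "b \<notin> {d, e}" "c \<notin> {d, e}" "distinct [a, b, c]"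
    by auto
  have "a \<in> {1..5}" "b \<in> {1..5}" "c \<in> {1..5}"
    using abcde by blast+
  from de show ?thesis
  proof
    assume "{d, e} = {2, 5}"
    then have "a \<notin> {2, 5}" "b \<notin> {2, 5}" "c \<notin> {2, 5}"
      using abc by simp_all
    then have "a \<in> {1, 3, 4}" "b \<in> {1, 3, 4}" "c \<in> {1, 3, 4}"
      using \<open>a \<in> {1..5}\<close> \<open>b \<in> {1..5}\<close> \<open>c \<in> {1..5}\<close> by auto
    then show ?thesis
      using abc(4) \<open>1 \<le> n\<close> by (rule card_avoiders_pop5_isolated_2_5)
  next
    assume "{d, e} = {3, 5}"
    then have "a \<notin> {3, 5}" "b \<notin> {3, 5}" "c \<notin> {3, 5}"
      using abc by simp_all
    then have "a \<in> {1, 2, 4}" "b \<in> {1, 2, 4}" "c \<in> {1, 2, 4}"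
      using \<open>a \<in> {1..5}\<close> \<open>b \<in> {1..5}\<close> \<open>c \<in> {1..5}\<close> by auto
    then show ?thesis
      using abc(4) \<open>1 \<le> n\<close> by (rule card_avoiders_pop5_isolated_3_5)
  qed
qed

theorem mainTheorem11:
  fixes a b c d e a' b' c' d' e' :: nat
  assumes "{a, b, c, d, e} = {1..5}"
    and "{d, e} = {2, 5} \<or> {d, e} = {3, 5}"
    and "{a', b', c', d', e'} = {1..5}"
    and "{d', e'} = {2, 5} \<or> {d', e'} = {3, 5}"
  shows "wilf_equiv (pop5 a b c d e) (pop5 a' b' c' d' e') 5"
  unfolding wilf_equiv_def
  using card_avoiders_pop5[OF assms(1,2)] card_avoiders_pop5[OF assms(3,4)] by simp

end
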